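(* Let $X,Y$ be compact metric spaces, $d$ the metric on $X$, and let $\phi:\mathrm{M}_m(\mathrm{C}(X))\to\mathrm{M}_{nm}(\mathrm{C}(Y))$ be a diagonal $*$-homomorphism with eigenvalue maps $\lambda_1,\dots,\lambda_n:Y\to X$, i.e. $\phi(f)=\mathrm{diag}(f\circ\lambda_1,\dots,f\circ\lambda_n)$ with each $f\circ\lambda_s$ an $m\times m$ block. Let $\epsilon>0$, $f\in\mathrm{M}_m(\mathrm{C}(X))$, and choose $\eta>0$ such that $\|f(x)-f(y)\|<\epsilon$ whenever $d(x,y)<2\eta$. Let $U$ be the open ball of radius $\eta$ centred at $x_0\in X$ and suppose that $Y=\lambda_1^{-1}(U)\cup\cdots\cup\lambda_n^{-1}(U)$. Then there exist a unitary $u\in\mathrm{M}_{nm}(\mathrm{C}(Y))$ and an element $b\in\mathrm{M}_{nm-m}(\mathrm{C}(Y))$ such that \[ \Big\|u\,\phi(f)\,u^*-\begin{pmatrix} f(x_0)&0\\0&b\end{pmatrix}\Big\|<\epsilon, \] where $f(x_0)\in\mathrm{M}_m$ is regarded as a constant function. *)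

theory Defs
  imports "HOL-Analysis.Analysis" "Jordan_Normal_Form.Matrix"
begin

definition cvec_norm :: "complex vec \<Rightarrow> real" where
  "cvec_norm v = sqrt (\<Sum>i<dim_vec v. (cmod (vec_index v i))\<^sup>2)"

definition op_norm :: "complex mat \<Rightarrow> real" where
  "op_norm A = Sup {cvec_norm (Matrix.mult_mat_vec A v) | v. v \<in> carrier_vec (dim_col A) \<and> cvec_norm v \<le> 1}"

definition cadjoint :: "complex mat \<Rightarrow> complex mat" where
  "cadjoint A = mat (dim_col A) (dim_row A) (\<lambda>(i,j). cnj (A $$ (j,i)))"

definition unitary_mat :: "complex mat \<Rightarrow> bool" where
  "unitary_mat U \<longleftrightarrow> (\<exists>k. U \<in> carrier_mat k k \<and>
      U * cadjoint U = 1\<^sub>m k \<and> cadjoint U * U = 1\<^sub>m k)"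

text \<open>Elements of M_k(C(X)): functions X -> k x k complex matrices with continuous entries.\<close>
definition mat_cont :: "nat \<Rightarrow> ('a::topological_space \<Rightarrow> complex mat) \<Rightarrow> bool" where
  "mat_cont k f \<longleftrightarrow> (\<forall>x. f x \<in> carrier_mat k k) \<and>
      (\<forall>i<k. \<forall>j<k. continuous_on UNIV (\<lambda>x. f x $$ (i,j)))"

definition sup_norm :: "('a \<Rightarrow> complex mat) \<Rightarrow> real" where
  "sup_norm g = (SUP y. op_norm (g y))"

text \<open>The diagonal *-homomorphism phi(f) = diag(f o lambda_1, ..., f o lambda_n),
  blocks of size m; block s (0-based, s < n) is f o lam s.\<close>
definition diag_hom :: "nat \<Rightarrow> nat \<Rightarrow> (nat \<Rightarrow> 'b \<Rightarrow> 'a) \<Rightarrow> ('a \<Rightarrow> complex mat) \<Rightarrow> 'b \<Rightarrow> complex mat" where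
  "diag_hom m n lam f y = mat (n*m) (n*m) (\<lambda>(i,j).
      if i div m = j div m then f (lam (i div m) y) $$ (i mod m, j mod m) else 0)"

end

theory Submission
  imports Defs "Jordan_Normal_Form.Determinant"
begin

text \<open>
  Choose continuous weights \<open>h\<^sub>1(y), \<dots>, h\<^sub>n(y) \<ge> 0\<close> with \<open>\<Sum> h\<^sub>s(y)\<^sup>2 = 1\<close> that vanish unless
  \<open>\<lambda>\<^sub>s(y) \<in> U\<close> (a normalised partition of unity subordinate to the cover), and let \<open>Q(y)\<close> be a
  real orthogonal matrix with first row \<open>h(y)\<close>. Conjugation by \<open>u = Q \<otimes> 1\<^sub>m\<close> turns
  \<open>\<phi>(f)(y) = diag(f(\<lambda>\<^sub>s y))\<close> into the block matrix whose \<open>(I, J)\<close> block is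
  \<open>\<Sum>\<^sub>t Q(I,t) Q(J,t) f(\<lambda>\<^sub>t y)\<close>. If every \<open>f(\<lambda>\<^sub>t y)\<close> with \<open>h\<^sub>t(y) \<noteq> 0\<close> is replaced by
  \<open>f(x\<^sub>0)\<close>, orthonormality of the rows of \<open>Q\<close> makes the result \<open>f(x\<^sub>0) \<oplus> b\<close>.
  The replacement is made continuous by a cut-off supported in the closed ball of radius
  \<open>3\<eta>/2 < 2\<eta>\<close>, on which \<open>\<parallel>f(x) - f(x\<^sub>0)\<parallel>\<close> attains a maximum \<open>K < \<epsilon>\<close>; so it
  changes each diagonal block by at most \<open>K\<close>, and conjugating by a unitary does not increase
  the norm.
\<close>

unbundle no vec_syntax

lemma sum_lessThan_mult_blocks:
  fixes n m :: nat
  shows "(\<Sum>i<n * m. g i) = (\<Sum>s<n. \<Sum>a<m. g (s * m + a))"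
proof -
  have "(\<Sum>i<n * m. g i) = (\<Sum>s<n. sum g {s * m..<s * m + m})"
    by (rule sum.nat_group[symmetric])
  also have "\<dots> = (\<Sum>s<n. \<Sum>a<m. g (s * m + a))"
  proof (rule sum.cong[OF refl])
    fix s
    have "sum g {0 + s * m..<m + s * m} = (\<Sum>a = 0..<m. g (a + s * m))"
      by (rule sum.shift_bounds_nat_ivl)
    then show "sum g {s * m..<s * m + m} = (\<Sum>a<m. g (s * m + a))"
      by (simp add: add.commute atLeast0LessThan)
  qed
  finally show ?thesis .
qed

lemma block_index_less:
  fixes s a :: nat
  assumes "s < n" "a < m"
  shows "s * m + a < n * m"
proof -
  have "s * m + a < Suc s * m" using assms by simp
  also have "\<dots> \<le> n * m" using assms by (intro mult_le_mono1) simp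
  finally show ?thesis .
qed

lemma div_mod_less_of_less_mult:
  fixes i :: nat
  assumes "i < n * m"
  shows "i div m < n" "i mod m < m"
proof -
  have "m > 0" using assms by (cases m) auto
  then show "i div m < n" "i mod m < m" using assms by (simp_all add: less_mult_imp_div_less)
qed

lemma sum_of_bool_mult:
  fixes t n :: nat and g :: "nat \<Rightarrow> real"
  shows "t < n \<Longrightarrow> (\<Sum>k<n. of_bool (t = k) * g k) = g t"
  by (simp add: of_bool_def if_distrib[of "\<lambda>x. x * _"] cong: if_cong)

subsection \<open>Norms of vectors and matrices\<close>

lemma cvec_norm_L2_set: "cvec_norm v = L2_set (\<lambda>i. cmod (v $ i)) {..<dim_vec v}"
  unfolding cvec_norm_def L2_set_def by simp

lemma cvec_norm_nonneg: "cvec_norm v \<ge> 0"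
  unfolding cvec_norm_L2_set by simp

lemma cvec_norm_power2: "(cvec_norm v)\<^sup>2 = (\<Sum>i<dim_vec v. (cmod (v $ i))\<^sup>2)"
  unfolding cvec_norm_def by (simp add: sum_nonneg)

lemma cvec_norm_power2_complex:
  "complex_of_real ((cvec_norm v)\<^sup>2) = (\<Sum>i<dim_vec v. v $ i * cnj (v $ i))"
  unfolding cvec_norm_power2 of_real_sum complex_norm_square ..

lemma cvec_norm_smult: "cvec_norm (c \<cdot>\<^sub>v v) = cmod c * cvec_norm v"
proof -
  have "cvec_norm (c \<cdot>\<^sub>v v) = L2_set (\<lambda>i. cmod c * cmod (v $ i)) {..<dim_vec v}"
    unfolding cvec_norm_L2_set by (intro L2_set_cong) (auto simp: norm_mult)
  then show ?thesis unfolding cvec_norm_L2_set by (simp add: L2_set_right_distrib)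
qed

lemma cvec_norm_add_le:
  assumes "dim_vec v = dim_vec w"
  shows "cvec_norm (v + w) \<le> cvec_norm v + cvec_norm w"
proof -
  have "cvec_norm (v + w) \<le> L2_set (\<lambda>i. cmod (v $ i) + cmod (w $ i)) {..<dim_vec w}"
    unfolding cvec_norm_L2_set index_add_vec(2) by (rule L2_set_mono) (auto simp: norm_triangle_ineq)
  also have "\<dots> \<le> cvec_norm v + cvec_norm w"
    unfolding cvec_norm_L2_set using assms by (simp add: L2_set_triangle_ineq)
  finally show ?thesis .
qed

lemma cmod_index_le_cvec_norm: "i < dim_vec v \<Longrightarrow> cmod (v $ i) \<le> cvec_norm v"
  unfolding cvec_norm_L2_set by (rule member_le_L2_set) auto

definition entry_norm_sum :: "complex mat \<Rightarrow> real" where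
  "entry_norm_sum A = (\<Sum>i<dim_row A. \<Sum>j<dim_col A. cmod (A $$ (i, j)))"

lemma cvec_norm_mult_mat_vec_le_entry_norm_sum:
  assumes v: "v \<in> carrier_vec (dim_col A)"
  shows "cvec_norm (A *\<^sub>v v) \<le> entry_norm_sum A * cvec_norm v"
proof -
  have "cvec_norm (A *\<^sub>v v) \<le> (\<Sum>i<dim_row A. cmod ((A *\<^sub>v v) $ i))"
    unfolding cvec_norm_L2_set dim_mult_mat_vec by (rule L2_set_le_sum) simp
  also have "\<dots> \<le> (\<Sum>i<dim_row A. \<Sum>j<dim_col A. cmod (A $$ (i, j)) * cvec_norm v)"
  proof (rule sum_mono)
    fix i assume i: "i \<in> {..<dim_row A}"
    have "cmod ((A *\<^sub>v v) $ i) \<le> (\<Sum>j<dim_col A. cmod (A $$ (i, j) * v $ j))"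
      using i v by (simp add: scalar_prod_def atLeast0LessThan norm_sum)
    also have "\<dots> \<le> (\<Sum>j<dim_col A. cmod (A $$ (i, j)) * cvec_norm v)"
      using v by (intro sum_mono) (auto simp: norm_mult intro!: mult_left_mono cmod_index_le_cvec_norm)
    finally show "cmod ((A *\<^sub>v v) $ i) \<le> (\<Sum>j<dim_col A. cmod (A $$ (i, j)) * cvec_norm v)" .
  qed
  also have "\<dots> = entry_norm_sum A * cvec_norm v"
    unfolding entry_norm_sum_def by (simp add: sum_distrib_right)
  finally show ?thesis .
qed

lemma bdd_above_op_norm_set:
  "bdd_above {cvec_norm (A *\<^sub>v v) | v. v \<in> carrier_vec (dim_col A) \<and> cvec_norm v \<le> 1}"
proof (rule bdd_aboveI)
  fix x assume "x \<in> {cvec_norm (A *\<^sub>v v) | v. v \<in> carrier_vec (dim_col A) \<and> cvec_norm v \<le> 1}"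
  then obtain v where v: "v \<in> carrier_vec (dim_col A)" "cvec_norm v \<le> 1" and x: "x = cvec_norm (A *\<^sub>v v)"
    by auto
  have "0 \<le> entry_norm_sum A" unfolding entry_norm_sum_def by (intro sum_nonneg) auto
  then show "x \<le> entry_norm_sum A"
    using cvec_norm_mult_mat_vec_le_entry_norm_sum[OF v(1)] mult_left_mono[OF v(2)] x by fastforce
qed

lemma cvec_norm_mult_mat_vec_le_op_norm:
  "v \<in> carrier_vec (dim_col A) \<Longrightarrow> cvec_norm v \<le> 1 \<Longrightarrow> cvec_norm (A *\<^sub>v v) \<le> op_norm A"
  unfolding op_norm_def by (rule cSup_upper[OF _ bdd_above_op_norm_set]) auto

lemma op_norm_leI:
  assumes "\<And>v. v \<in> carrier_vec (dim_col A) \<Longrightarrow> cvec_norm v \<le> 1 \<Longrightarrow> cvec_norm (A *\<^sub>v v) \<le> K"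
  shows "op_norm A \<le> K"
proof -
  have "{cvec_norm (A *\<^sub>v v) | v. v \<in> carrier_vec (dim_col A) \<and> cvec_norm v \<le> 1} \<noteq> {}"
    by (auto simp: cvec_norm_def intro!: exI[of _ "0\<^sub>v (dim_col A)"])
  then show ?thesis unfolding op_norm_def by (rule cSup_least) (use assms in blast)
qed

lemma op_norm_nonneg: "op_norm A \<ge> 0"
proof -
  have "cvec_norm (0\<^sub>v (dim_col A)) = 0" by (simp add: cvec_norm_def)
  then have "cvec_norm (A *\<^sub>v 0\<^sub>v (dim_col A)) \<le> op_norm A"
    by (intro cvec_norm_mult_mat_vec_le_op_norm) auto
  then show ?thesis using cvec_norm_nonneg order_trans by blast
qed

lemma cvec_norm_mult_mat_vec_le:
  assumes v: "v \<in> carrier_vec (dim_col A)"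
  shows "cvec_norm (A *\<^sub>v v) \<le> op_norm A * cvec_norm v"
proof (cases "cvec_norm v = 0")
  case True
  then show ?thesis using cvec_norm_mult_mat_vec_le_entry_norm_sum[OF v] by simp
next
  case False
  then have pos: "cvec_norm v > 0" using cvec_norm_nonneg[of v] by simp
  let ?c = "complex_of_real (1 / cvec_norm v)"
  have "A *\<^sub>v (?c \<cdot>\<^sub>v v) = ?c \<cdot>\<^sub>v (A *\<^sub>v v)"
    by (rule mult_mat_vec[OF _ v]) auto
  moreover have "cvec_norm (A *\<^sub>v (?c \<cdot>\<^sub>v v)) \<le> op_norm A"
    using v pos by (intro cvec_norm_mult_mat_vec_le_op_norm) (auto simp: cvec_norm_smult norm_divide)
  ultimately show ?thesis using pos by (simp add: cvec_norm_smult norm_divide divide_le_eq)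
qed

lemma op_norm_le_entry_norm_sum: "op_norm A \<le> entry_norm_sum A"
  by (rule op_norm_leI, rule order_trans[OF cvec_norm_mult_mat_vec_le_entry_norm_sum])
    (auto simp: entry_norm_sum_def intro!: mult_left_le sum_nonneg)

lemma op_norm_add_le:
  assumes A: "A \<in> carrier_mat r c" and B: "B \<in> carrier_mat r c"
  shows "op_norm (A + B) \<le> op_norm A + op_norm B"
proof (rule op_norm_leI)
  fix v assume v: "v \<in> carrier_vec (dim_col (A + B))" and "cvec_norm v \<le> 1"
  then have "cvec_norm (A *\<^sub>v v) \<le> op_norm A" "cvec_norm (B *\<^sub>v v) \<le> op_norm B"
    using A B by (auto intro!: cvec_norm_mult_mat_vec_le_op_norm)
  moreover have "(A + B) *\<^sub>v v = A *\<^sub>v v + B *\<^sub>v v"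
    using A B v by (simp add: add_mult_distrib_mat_vec)
  ultimately show "cvec_norm ((A + B) *\<^sub>v v) \<le> op_norm A + op_norm B"
    using cvec_norm_add_le[of "A *\<^sub>v v" "B *\<^sub>v v"] A B by fastforce
qed

lemma op_norm_smult_le: "op_norm (c \<cdot>\<^sub>m A) \<le> cmod c * op_norm A"
proof (rule op_norm_leI)
  fix v assume v: "v \<in> carrier_vec (dim_col (c \<cdot>\<^sub>m A))" and "cvec_norm v \<le> 1"
  moreover have "(c \<cdot>\<^sub>m A) *\<^sub>v v = c \<cdot>\<^sub>v (A *\<^sub>v v)"
    using v by (intro eq_vecI) (auto simp: scalar_prod_def sum_distrib_left mult.assoc intro!: sum.cong)
  ultimately show "cvec_norm ((c \<cdot>\<^sub>m A) *\<^sub>v v) \<le> cmod c * op_norm A"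
    by (auto simp: cvec_norm_smult intro!: mult_left_mono cvec_norm_mult_mat_vec_le_op_norm)
qed

lemma abs_op_norm_diff_le:
  assumes A: "A \<in> carrier_mat r c" and B: "B \<in> carrier_mat r c"
  shows "\<bar>op_norm A - op_norm B\<bar> \<le> entry_norm_sum (A - B)"
proof -
  have "A = B + (A - B)" "B = A + (B - A)"
    using A B by auto
  then have "op_norm A \<le> op_norm B + op_norm (A - B)" "op_norm B \<le> op_norm A + op_norm (B - A)"
    using A B by (metis op_norm_add_le minus_carrier_mat)+
  moreover have "entry_norm_sum (B - A) = entry_norm_sum (A - B)"
    using A B unfolding entry_norm_sum_def by (auto simp: norm_minus_commute intro!: sum.cong)
  ultimately show ?thesis
    using op_norm_le_entry_norm_sum[of "A - B"] op_norm_le_entry_norm_sum[of "B - A"]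
    by linarith
qed

lemma sup_norm_le: "(\<And>y. op_norm (g y) \<le> K) \<Longrightarrow> sup_norm g \<le> K"
  unfolding sup_norm_def by (rule cSUP_least) auto

lemma dim_cadjoint [simp]: "dim_row (cadjoint A) = dim_col A" "dim_col (cadjoint A) = dim_row A"
  unfolding cadjoint_def by simp_all

lemma index_cadjoint [simp]:
  "i < dim_col A \<Longrightarrow> j < dim_row A \<Longrightarrow> cadjoint A $$ (i, j) = cnj (A $$ (j, i))"
  unfolding cadjoint_def by simp

lemma cadjoint_carrier_mat [simp]: "A \<in> carrier_mat r c \<Longrightarrow> cadjoint A \<in> carrier_mat c r"
  unfolding carrier_mat_def by simp

lemma cadjoint_cadjoint [simp]: "cadjoint (cadjoint A) = A"
  by (rule eq_matI) simp_all

lemma cvec_norm_mult_mat_vec_isometry: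
  assumes U: "U \<in> carrier_mat r c" and UU: "cadjoint U * U = 1\<^sub>m c" and v: "v \<in> carrier_vec c"
  shows "cvec_norm (U *\<^sub>v v) = cvec_norm v"
proof -
  have orth: "(\<Sum>i<r. cnj (U $$ (i, l)) * U $$ (i, k)) = of_bool (l = k)" if "l < c" "k < c" for l k
  proof -
    have "(\<Sum>i<r. cnj (U $$ (i, l)) * U $$ (i, k)) = (cadjoint U * U) $$ (l, k)"
      using U that by (simp add: scalar_prod_def atLeast0LessThan)
    then show ?thesis using UU that by simp
  qed
  have "complex_of_real ((cvec_norm (U *\<^sub>v v))\<^sup>2)
      = (\<Sum>i<r. (\<Sum>k<c. U $$ (i, k) * v $ k) * cnj (\<Sum>l<c. U $$ (i, l) * v $ l))"
    unfolding cvec_norm_power2_complex using U v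
    by (intro sum.cong) (auto simp: scalar_prod_def atLeast0LessThan simp del: cnj_sum)
  also have "\<dots> = (\<Sum>i<r. \<Sum>k<c. \<Sum>l<c. v $ k * cnj (v $ l) * (cnj (U $$ (i, l)) * U $$ (i, k)))"
    by (simp only: cnj_sum sum_product) (simp add: mult_ac)
  also have "\<dots> = (\<Sum>k<c. \<Sum>l<c. \<Sum>i<r. v $ k * cnj (v $ l) * (cnj (U $$ (i, l)) * U $$ (i, k)))"
    by (subst sum.swap, rule sum.cong[OF refl], rule sum.swap)
  also have "\<dots> = (\<Sum>k<c. \<Sum>l<c. v $ k * cnj (v $ l) * (\<Sum>i<r. cnj (U $$ (i, l)) * U $$ (i, k)))"
    by (simp add: sum_distrib_left)
  also have "\<dots> = (\<Sum>k<c. v $ k * cnj (v $ k))"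
    by (simp add: orth)
  also have "\<dots> = complex_of_real ((cvec_norm v)\<^sup>2)"
    using v by (simp add: cvec_norm_power2_complex del: of_real_power)
  finally show ?thesis
    using cvec_norm_nonneg by (simp del: of_real_power)
qed

lemma op_norm_unitary_conj_le:
  assumes "unitary_mat U" and U: "U \<in> carrier_mat k k" and B: "B \<in> carrier_mat k k"
  shows "op_norm (U * B * cadjoint U) \<le> op_norm B"
proof (rule op_norm_leI)
  have UU: "cadjoint U * U = 1\<^sub>m k" "cadjoint (cadjoint U) * cadjoint U = 1\<^sub>m k"
    using assms unfolding unitary_mat_def by auto
  fix v assume "v \<in> carrier_vec (dim_col (U * B * cadjoint U))" and v1: "cvec_norm v \<le> 1"
  then have v: "v \<in> carrier_vec k" using U by simp
  have "(U * B * cadjoint U) *\<^sub>v v = U *\<^sub>v (B *\<^sub>v (cadjoint U *\<^sub>v v))"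
    using U B v by (simp add: assoc_mult_mat_vec[of _ k k _ k] mult_mat_vec_carrier[of _ k k])
  moreover have "B *\<^sub>v (cadjoint U *\<^sub>v v) \<in> carrier_vec k"
    using U B v by (metis mult_mat_vec_carrier cadjoint_carrier_mat)
  ultimately have "cvec_norm ((U * B * cadjoint U) *\<^sub>v v) = cvec_norm (B *\<^sub>v (cadjoint U *\<^sub>v v))"
    using cvec_norm_mult_mat_vec_isometry[OF U UU(1)] by simp
  also have "\<dots> \<le> op_norm B * cvec_norm (cadjoint U *\<^sub>v v)"
    using U B v
    by (intro cvec_norm_mult_mat_vec_le) (metis carrier_matD(2) mult_mat_vec_carrier cadjoint_carrier_mat)
  also have "\<dots> = op_norm B * cvec_norm v"
    using cvec_norm_mult_mat_vec_isometry[OF cadjoint_carrier_mat[OF U] UU(2) v] by simp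
  also have "\<dots> \<le> op_norm B"
    using v1 op_norm_nonneg by (simp add: mult_left_le)
  finally show "cvec_norm ((U * B * cadjoint U) *\<^sub>v v) \<le> op_norm B" .
qed

subsection \<open>Continuous matrix-valued functions\<close>

lemma mat_contI:
  assumes "\<And>x. F x \<in> carrier_mat k k"
    and "\<And>i j. i < k \<Longrightarrow> j < k \<Longrightarrow> continuous_on UNIV (\<lambda>x. F x $$ (i, j))"
  shows "mat_cont k F"
  using assms unfolding mat_cont_def by blast

lemma mat_cont_carrier: "mat_cont k F \<Longrightarrow> F x \<in> carrier_mat k k"
  unfolding mat_cont_def by blast

lemma mat_cont_entry: "mat_cont k F \<Longrightarrow> i < k \<Longrightarrow> j < k \<Longrightarrow> continuous_on UNIV (\<lambda>x. F x $$ (i, j))"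
  unfolding mat_cont_def by blast

lemma mat_cont_const: "C \<in> carrier_mat k k \<Longrightarrow> mat_cont k (\<lambda>_. C)"
  unfolding mat_cont_def by simp

lemma mat_cont_minus:
  assumes A: "mat_cont k A" and B: "mat_cont k B"
  shows "mat_cont k (\<lambda>x. A x - B x)"
proof (rule mat_contI)
  note carrier = mat_cont_carrier[OF A] mat_cont_carrier[OF B]
  show "A x - B x \<in> carrier_mat k k" for x using carrier by (simp add: minus_carrier_mat)
  fix i j assume ij: "i < k" "j < k"
  then have eq: "(\<lambda>x. (A x - B x) $$ (i, j)) = (\<lambda>x. A x $$ (i, j) - B x $$ (i, j))"
    by (simp add: carrier_matD[OF carrier(2)])
  show "continuous_on UNIV (\<lambda>x. (A x - B x) $$ (i, j))"
    unfolding eq by (intro continuous_on_diff mat_cont_entry[OF A ij] mat_cont_entry[OF B ij])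
qed

lemma mat_cont_mult:
  assumes A: "mat_cont k A" and B: "mat_cont k B"
  shows "mat_cont k (\<lambda>x. A x * B x)"
proof (rule mat_contI)
  note carrier = mat_cont_carrier[OF A] mat_cont_carrier[OF B]
  show "A x * B x \<in> carrier_mat k k" for x by (rule mult_carrier_mat[OF carrier])
  fix i j assume ij: "i < k" "j < k"
  then have eq: "(\<lambda>x. (A x * B x) $$ (i, j)) = (\<lambda>x. \<Sum>l<k. A x $$ (i, l) * B x $$ (l, j))"
    by (simp add: carrier_matD[OF carrier(1)] carrier_matD[OF carrier(2)] scalar_prod_def
        atLeast0LessThan)
  show "continuous_on UNIV (\<lambda>x. (A x * B x) $$ (i, j))"
    unfolding eq using ij
    by (intro continuous_on_sum continuous_on_mult mat_cont_entry[OF A] mat_cont_entry[OF B]) auto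
qed

lemma mat_cont_cadjoint:
  assumes A: "mat_cont k A"
  shows "mat_cont k (\<lambda>x. cadjoint (A x))"
proof (rule mat_contI)
  show "cadjoint (A x) \<in> carrier_mat k k" for x using mat_cont_carrier[OF A] by simp
  fix i j assume ij: "i < k" "j < k"
  then have eq: "(\<lambda>x. cadjoint (A x) $$ (i, j)) = (\<lambda>x. cnj (A x $$ (j, i)))"
    by (simp add: carrier_matD[OF mat_cont_carrier[OF A]])
  show "continuous_on UNIV (\<lambda>x. cadjoint (A x) $$ (i, j))"
    unfolding eq by (intro continuous_on_cnj mat_cont_entry[OF A ij(2,1)])
qed

lemma mat_cont_compose:
  assumes g: "continuous_on UNIV g" and F: "mat_cont k F"
  shows "mat_cont k (\<lambda>y. F (g y))"
proof (rule mat_contI)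
  show "F (g y) \<in> carrier_mat k k" for y by (rule mat_cont_carrier[OF F])
  show "continuous_on UNIV (\<lambda>y. F (g y) $$ (i, j))" if "i < k" "j < k" for i j
    using continuous_on_compose2[OF mat_cont_entry[OF F that] g] by simp
qed

lemma mat_cont_smult:
  assumes c: "continuous_on UNIV c" and A: "mat_cont k A"
  shows "mat_cont k (\<lambda>x. complex_of_real (c x) \<cdot>\<^sub>m A x)"
proof (rule mat_contI)
  have dims: "dim_row (A x) = k" "dim_col (A x) = k" for x
    using mat_cont_carrier[OF A] by auto
  show "complex_of_real (c x) \<cdot>\<^sub>m A x \<in> carrier_mat k k" for x
    using mat_cont_carrier[OF A] by simp
  fix i j assume ij: "i < k" "j < k"
  then have eq: "(\<lambda>x. (complex_of_real (c x) \<cdot>\<^sub>m A x) $$ (i, j))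
      = (\<lambda>x. complex_of_real (c x) * A x $$ (i, j))"
    by (simp add: dims)
  show "continuous_on UNIV (\<lambda>x. (complex_of_real (c x) \<cdot>\<^sub>m A x) $$ (i, j))"
    unfolding eq by (intro continuous_on_mult continuous_on_of_real c mat_cont_entry[OF A ij])
qed

lemma continuous_on_op_norm:
  fixes A :: "'a::t2_space \<Rightarrow> complex mat"
  assumes "mat_cont k A"
  shows "continuous_on UNIV (\<lambda>x. op_norm (A x))"
proof -
  have carrier: "\<And>x. A x \<in> carrier_mat k k"
    and entries: "\<And>i j. i < k \<Longrightarrow> j < k \<Longrightarrow> continuous_on UNIV (\<lambda>x. A x $$ (i, j))"
    using assms unfolding mat_cont_def by auto
  have "continuous (at x) (\<lambda>x. op_norm (A x))" for x
  proof -
    let ?\<psi> = "\<lambda>x'. \<Sum>i<k. \<Sum>j<k. cmod (A x' $$ (i, j) - A x $$ (i, j))"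
    have "((\<lambda>x'. A x' $$ (i, j)) \<longlongrightarrow> A x $$ (i, j)) (at x)" if "i < k" "j < k" for i j
      using entries[OF that] by (simp add: continuous_on_eq_continuous_at continuous_at)
    then have "(?\<psi> \<longlongrightarrow> (\<Sum>i<k. \<Sum>j<k. cmod (A x $$ (i, j) - A x $$ (i, j)))) (at x)"
      by (intro tendsto_intros) auto
    then have \<psi>: "(?\<psi> \<longlongrightarrow> 0) (at x)" by simp
    have bound: "norm (op_norm (A x') - op_norm (A x)) \<le> ?\<psi> x'" for x'
    proof -
      have "entry_norm_sum (A x' - A x) = ?\<psi> x'"
        using carrier[of x'] carrier[of x] unfolding entry_norm_sum_def by (intro sum.cong) auto
      then show ?thesis
        using abs_op_norm_diff_le[OF carrier carrier, of x' x] unfolding real_norm_def by linarith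
    qed
    have "((\<lambda>x'. op_norm (A x') - op_norm (A x)) \<longlongrightarrow> 0) (at x)"
      by (rule Lim_null_comparison[OF always_eventually \<psi>]) (use bound in blast)
    then show ?thesis unfolding continuous_at by (rule LIM_zero_cancel)
  qed
  then show ?thesis by (simp add: continuous_at_imp_continuous_on)
qed

lemma compact_obtain_strict_bound:
  fixes \<phi> :: "'a::topological_space \<Rightarrow> real"
  assumes "compact S" "continuous_on S \<phi>" "\<And>x. x \<in> S \<Longrightarrow> \<phi> x < \<epsilon>"
  obtains K where "K < \<epsilon>" "\<And>x. x \<in> S \<Longrightarrow> \<phi> x \<le> K"
proof (cases "S = {}")
  case True
  then show ?thesis using that[of "\<epsilon> - 1"] by simp
next
  case False
  then obtain x where "x \<in> S" "\<forall>y\<in>S. \<phi> y \<le> \<phi> x"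
    using continuous_attains_sup[OF assms(1) _ assms(2)] by blast
  then show ?thesis using that assms(3) by blast
qed

lemma obtain_uniform_op_norm_bound:
  fixes f :: "'x::metric_space \<Rightarrow> complex mat"
  assumes X: "compact (UNIV :: 'x set)" and f: "mat_cont m f" and r: "0 \<le> r"
    and less: "\<And>x. dist x0 x \<le> r \<Longrightarrow> op_norm (f x - f x0) < \<epsilon>"
  obtains K where "0 \<le> K" "K < \<epsilon>" "\<And>x. dist x0 x \<le> r \<Longrightarrow> op_norm (f x - f x0) \<le> K"
proof -
  have "continuous_on (cball x0 r) (\<lambda>x. op_norm (f x - f x0))"
    using f by (intro continuous_on_subset[OF continuous_on_op_norm] mat_cont_minus mat_cont_const
        mat_cont_carrier) auto
  moreover have "compact (cball x0 r)"
    using compact_Int_closed[OF X closed_cball] by simp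
  ultimately obtain K where K: "K < \<epsilon>" "\<And>x. dist x0 x \<le> r \<Longrightarrow> op_norm (f x - f x0) \<le> K"
    using compact_obtain_strict_bound[of "cball x0 r"] less by (metis mem_cball)
  moreover have "0 \<le> K"
    using K(2)[of x0] op_norm_nonneg[of "f x0 - f x0"] r by simp
  ultimately show ?thesis using that by blast
qed

subsection \<open>Block matrices\<close>

definition block_diag :: "nat \<Rightarrow> nat \<Rightarrow> (nat \<Rightarrow> complex mat) \<Rightarrow> complex mat" where
  "block_diag m n B = mat (n * m) (n * m) (\<lambda>(i, j).
      if i div m = j div m then B (i div m) $$ (i mod m, j mod m) else 0)"

definition vec_block :: "nat \<Rightarrow> nat \<Rightarrow> complex vec \<Rightarrow> complex vec" where
  "vec_block m s v = vec m (\<lambda>a. v $ (s * m + a))"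

lemma vec_block_carrier [simp]: "vec_block m s v \<in> carrier_vec m"
  unfolding vec_block_def by simp

lemma index_vec_block [simp]: "a < m \<Longrightarrow> vec_block m s v $ a = v $ (s * m + a)"
  unfolding vec_block_def by simp

lemma diag_hom_eq_block_diag: "diag_hom m n lam f y = block_diag m n (\<lambda>s. f (lam s y))"
  unfolding diag_hom_def block_diag_def ..

lemma dim_block_diag [simp]:
  "dim_row (block_diag m n B) = n * m" "dim_col (block_diag m n B) = n * m"
  unfolding block_diag_def by simp_all

lemma block_diag_carrier [simp]: "block_diag m n B \<in> carrier_mat (n * m) (n * m)"
  unfolding carrier_mat_def by simp

lemma index_block_diag_blocks:
  assumes "s < n" "t < n" "a < m" "b < m"
  shows "block_diag m n B $$ (s * m + a, t * m + b) = (if s = t then B s $$ (a, b) else 0)"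
  using assms block_index_less[of s n a m] block_index_less[of t n b m] by (simp add: block_diag_def)

lemma cvec_norm_power2_blocks:
  fixes n m :: nat
  assumes "v \<in> carrier_vec (n * m)"
  shows "(cvec_norm v)\<^sup>2 = (\<Sum>s<n. (cvec_norm (vec_block m s v))\<^sup>2)"
  using assms by (simp add: cvec_norm_power2 sum_lessThan_mult_blocks vec_block_def)

lemma index_block_diag_mult_vec:
  assumes B: "B s \<in> carrier_mat m m" and s: "s < n" and a: "a < m" and v: "v \<in> carrier_vec (n * m)"
  shows "(block_diag m n B *\<^sub>v v) $ (s * m + a) = (B s *\<^sub>v vec_block m s v) $ a"
proof -
  have "(block_diag m n B *\<^sub>v v) $ (s * m + a)
      = (\<Sum>t<n. \<Sum>b<m. block_diag m n B $$ (s * m + a, t * m + b) * v $ (t * m + b))"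
    using s a v block_index_less[OF s a]
    by (simp add: scalar_prod_def atLeast0LessThan sum_lessThan_mult_blocks)
  also have "\<dots> = (\<Sum>t<n. if t = s then (\<Sum>b<m. B s $$ (a, b) * v $ (s * m + b)) else 0)"
    using s a by (intro sum.cong refl) (auto simp: index_block_diag_blocks)
  also have "\<dots> = (\<Sum>b<m. B s $$ (a, b) * v $ (s * m + b))"
    using s by simp
  also have "\<dots> = (B s *\<^sub>v vec_block m s v) $ a"
    using B a by (simp add: vec_block_def scalar_prod_def atLeast0LessThan)
  finally show ?thesis .
qed

lemma op_norm_block_diag_le:
  assumes K: "0 \<le> K" and B: "\<And>s. s < n \<Longrightarrow> B s \<in> carrier_mat m m \<and> op_norm (B s) \<le> K"
  shows "op_norm (block_diag m n B) \<le> K"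
proof (rule op_norm_leI)
  fix v assume "v \<in> carrier_vec (dim_col (block_diag m n B))" and v1: "cvec_norm v \<le> 1"
  then have v: "v \<in> carrier_vec (n * m)" by simp
  have "(cvec_norm (block_diag m n B *\<^sub>v v))\<^sup>2
      = (\<Sum>s<n. (cvec_norm (vec_block m s (block_diag m n B *\<^sub>v v)))\<^sup>2)"
    by (rule cvec_norm_power2_blocks, rule mult_mat_vec_carrier[OF block_diag_carrier v])
  also have "\<dots> = (\<Sum>s<n. (cvec_norm (B s *\<^sub>v vec_block m s v))\<^sup>2)"
  proof (intro sum.cong refl arg_cong[where f = "\<lambda>x. (cvec_norm x)\<^sup>2"])
    fix s assume s: "s \<in> {..<n}"
    then have "B s \<in> carrier_mat m m" using B by blast
    then show "vec_block m s (block_diag m n B *\<^sub>v v) = B s *\<^sub>v vec_block m s v"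
      using s v by (intro eq_vecI) (auto simp: index_block_diag_mult_vec)
  qed
  also have "\<dots> \<le> (\<Sum>s<n. (K * cvec_norm (vec_block m s v))\<^sup>2)"
  proof (intro sum_mono power_mono)
    fix s assume "s \<in> {..<n}"
    then have Bs: "B s \<in> carrier_mat m m" "op_norm (B s) \<le> K" using B by auto
    then have "cvec_norm (B s *\<^sub>v vec_block m s v) \<le> op_norm (B s) * cvec_norm (vec_block m s v)"
      using cvec_norm_mult_mat_vec_le[of "vec_block m s v" "B s"] by simp
    also have "\<dots> \<le> K * cvec_norm (vec_block m s v)"
      using Bs(2) by (intro mult_right_mono cvec_norm_nonneg)
    finally show "cvec_norm (B s *\<^sub>v vec_block m s v) \<le> K * cvec_norm (vec_block m s v)" .
  qed (rule cvec_norm_nonneg)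
  also have "\<dots> = K\<^sup>2 * (\<Sum>s<n. (cvec_norm (vec_block m s v))\<^sup>2)"
    by (simp add: power_mult_distrib sum_distrib_left)
  also have "\<dots> = (K * cvec_norm v)\<^sup>2"
    by (simp add: cvec_norm_power2_blocks[OF v] power_mult_distrib)
  finally have "cvec_norm (block_diag m n B *\<^sub>v v) \<le> K * cvec_norm v"
    by (rule power2_le_imp_le) (simp add: K cvec_norm_nonneg)
  also have "\<dots> \<le> K" using K v1 by (simp add: mult_left_le)
  finally show "cvec_norm (block_diag m n B *\<^sub>v v) \<le> K" .
qed

lemma block_diag_add:
  assumes "\<And>s. s < n \<Longrightarrow> B s = A s + E s" and "\<And>s. s < n \<Longrightarrow> E s \<in> carrier_mat m m"
  shows "block_diag m n B = block_diag m n A + block_diag m n E"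
proof (rule eq_matI)
  fix i j assume "i < dim_row (block_diag m n A + block_diag m n E)"
    and "j < dim_col (block_diag m n A + block_diag m n E)"
  then have ij: "i < n * m" "j < n * m" by simp_all
  then have "B (j div m) = A (j div m) + E (j div m)" "E (j div m) \<in> carrier_mat m m"
    "i mod m < m" "j mod m < m"
    using assms div_mod_less_of_less_mult by blast+
  then show "block_diag m n B $$ (i, j) = (block_diag m n A + block_diag m n E) $$ (i, j)"
    using ij by (simp add: block_diag_def)
qed simp_all

lemma mat_cont_block_diag:
  assumes "\<And>s. s < n \<Longrightarrow> mat_cont m (B s)"
  shows "mat_cont (n * m) (\<lambda>y. block_diag m n (\<lambda>s. B s y))"
proof (rule mat_contI)
  fix i j assume ij: "i < n * m" "j < n * m"
  then have "mat_cont m (B (i div m))" "i mod m < m" "j mod m < m"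
    using assms div_mod_less_of_less_mult by blast+
  then show "continuous_on UNIV (\<lambda>y. block_diag m n (\<lambda>s. B s y) $$ (i, j))"
    using ij by (cases "i div m = j div m") (simp_all add: block_diag_def mat_cont_entry)
qed simp

definition orthonormal_rows :: "nat \<Rightarrow> (nat \<Rightarrow> nat \<Rightarrow> real) \<Rightarrow> bool" where
  "orthonormal_rows n Q \<longleftrightarrow> (\<forall>s<n. \<forall>t<n. (\<Sum>k<n. Q s k * Q t k) = of_bool (s = t))"

text \<open>\<open>Q \<otimes> 1\<^sub>m\<close>, reading an index \<open>i < n * m\<close> as the pair \<open>(i div m, i mod m)\<close>.\<close>

definition kron_id :: "nat \<Rightarrow> nat \<Rightarrow> (nat \<Rightarrow> nat \<Rightarrow> real) \<Rightarrow> complex mat" where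
  "kron_id m n Q = mat (n * m) (n * m) (\<lambda>(i, j).
      if i mod m = j mod m then complex_of_real (Q (i div m) (j div m)) else 0)"

lemma dim_kron_id [simp]: "dim_row (kron_id m n Q) = n * m" "dim_col (kron_id m n Q) = n * m"
  unfolding kron_id_def by simp_all

lemma kron_id_carrier [simp]: "kron_id m n Q \<in> carrier_mat (n * m) (n * m)"
  unfolding carrier_mat_def by simp

lemma index_kron_id_block:
  assumes "i < n * m" "t < n" "c < m"
  shows "kron_id m n Q $$ (i, t * m + c) = (if i mod m = c then complex_of_real (Q (i div m) t) else 0)"
  using assms block_index_less[of t n c m] by (simp add: kron_id_def)

lemma index_block_kron_id:
  assumes "j < n * m" "t < n" "c < m"
  shows "kron_id m n Q $$ (t * m + c, j) = (if c = j mod m then complex_of_real (Q t (j div m)) else 0)"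
  using assms block_index_less[of t n c m] by (simp add: kron_id_def)

lemma cadjoint_kron_id: "cadjoint (kron_id m n Q) = kron_id m n (\<lambda>s t. Q t s)"
  by (rule eq_matI) (auto simp: kron_id_def)

lemma index_kron_id_mult:
  assumes X: "X \<in> carrier_mat (n * m) c" and i: "i < n * m" and j: "j < c"
  shows "(kron_id m n Q * X) $$ (i, j)
    = (\<Sum>t<n. complex_of_real (Q (i div m) t) * X $$ (t * m + i mod m, j))"
proof -
  have "(kron_id m n Q * X) $$ (i, j)
      = (\<Sum>t<n. \<Sum>b<m. kron_id m n Q $$ (i, t * m + b) * X $$ (t * m + b, j))"
    using X i j by (simp add: scalar_prod_def atLeast0LessThan sum_lessThan_mult_blocks)
  also have "\<dots> = (\<Sum>t<n. complex_of_real (Q (i div m) t) * X $$ (t * m + i mod m, j))"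
    using i div_mod_less_of_less_mult[OF i]
    by (intro sum.cong refl) (simp add: index_kron_id_block if_distrib[of "\<lambda>x. x * _"] cong: if_cong)
  finally show ?thesis .
qed

lemma index_mult_kron_id:
  assumes X: "X \<in> carrier_mat r (n * m)" and i: "i < r" and j: "j < n * m"
  shows "(X * kron_id m n Q) $$ (i, j)
    = (\<Sum>t<n. X $$ (i, t * m + j mod m) * complex_of_real (Q t (j div m)))"
proof -
  have "(X * kron_id m n Q) $$ (i, j)
      = (\<Sum>t<n. \<Sum>b<m. X $$ (i, t * m + b) * kron_id m n Q $$ (t * m + b, j))"
    using X i j by (simp add: scalar_prod_def atLeast0LessThan sum_lessThan_mult_blocks)
  also have "\<dots> = (\<Sum>t<n. X $$ (i, t * m + j mod m) * complex_of_real (Q t (j div m)))"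
    using j div_mod_less_of_less_mult[OF j]
    by (intro sum.cong refl) (simp add: index_block_kron_id if_distrib[of "\<lambda>x. _ * x"] cong: if_cong)
  finally show ?thesis .
qed

lemma kron_id_mult_kron_id:
  "kron_id m n P * kron_id m n Q = kron_id m n (\<lambda>s t. \<Sum>k<n. P s k * Q k t)" (is "_ = ?R")
proof (rule eq_matI)
  fix i j assume "i < dim_row ?R" and "j < dim_col ?R"
  then have ij: "i < n * m" "j < n * m" by simp_all
  have "(kron_id m n P * kron_id m n Q) $$ (i, j)
      = (\<Sum>t<n. complex_of_real (P (i div m) t) * kron_id m n Q $$ (t * m + i mod m, j))"
    using ij by (intro index_kron_id_mult) auto
  also have "\<dots> = (\<Sum>t<n. complex_of_real (P (i div m) t) *
      (if i mod m = j mod m then complex_of_real (Q t (j div m)) else 0))"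
    using ij div_mod_less_of_less_mult[OF ij(1)]
    by (intro sum.cong refl) (auto simp: index_block_kron_id)
  also have "\<dots> = ?R $$ (i, j)"
    using ij by (cases "i mod m = j mod m") (simp_all add: kron_id_def)
  finally show "(kron_id m n P * kron_id m n Q) $$ (i, j) = ?R $$ (i, j)" .
qed simp_all

lemma kron_id_cong:
  "(\<And>s t. s < n \<Longrightarrow> t < n \<Longrightarrow> P s t = Q s t) \<Longrightarrow> kron_id m n P = kron_id m n Q"
  by (rule eq_matI) (auto simp: kron_id_def div_mod_less_of_less_mult)

lemma kron_id_of_bool_eq: "kron_id m n (\<lambda>s t. of_bool (s = t)) = 1\<^sub>m (n * m)"
proof (rule eq_matI)
  fix i j :: nat
  have "(i div m = j div m \<and> i mod m = j mod m) = (i = j)"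
    by (metis div_mult_mod_eq)
  then show "kron_id m n (\<lambda>s t. of_bool (s = t)) $$ (i, j) = 1\<^sub>m (n * m) $$ (i, j)"
    if "i < dim_row (1\<^sub>m (n * m))" "j < dim_col (1\<^sub>m (n * m))"
    using that by (auto simp: kron_id_def)
qed simp_all

lemma unitary_kron_id:
  assumes "orthonormal_rows n Q"
  shows "unitary_mat (kron_id m n Q)"
proof -
  have "kron_id m n Q * cadjoint (kron_id m n Q) = kron_id m n (\<lambda>s t. \<Sum>k<n. Q s k * Q t k)"
    by (simp add: cadjoint_kron_id kron_id_mult_kron_id)
  also have "\<dots> = 1\<^sub>m (n * m)"
    using assms unfolding orthonormal_rows_def by (simp add: kron_id_cong kron_id_of_bool_eq)
  finally have right: "kron_id m n Q * cadjoint (kron_id m n Q) = 1\<^sub>m (n * m)" .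
  then have "cadjoint (kron_id m n Q) * kron_id m n Q = 1\<^sub>m (n * m)"
    by (rule mat_mult_left_right_inverse[OF kron_id_carrier cadjoint_carrier_mat[OF kron_id_carrier]])
  with right show ?thesis unfolding unitary_mat_def using kron_id_carrier by blast
qed

lemma index_kron_id_conj_block_diag:
  assumes i: "i < n * m" and j: "j < n * m"
  shows "(kron_id m n Q * block_diag m n B * cadjoint (kron_id m n Q)) $$ (i, j)
    = (\<Sum>t<n. complex_of_real (Q (i div m) t * Q (j div m) t) * B t $$ (i mod m, j mod m))"
proof -
  have blocks: "(kron_id m n Q * block_diag m n B) $$ (i, t * m + j mod m)
      = complex_of_real (Q (i div m) t) * B t $$ (i mod m, j mod m)" if t: "t < n" for t
  proof -
    have "(kron_id m n Q * block_diag m n B) $$ (i, t * m + j mod m)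
        = (\<Sum>s<n. complex_of_real (Q (i div m) s)
            * block_diag m n B $$ (s * m + i mod m, t * m + j mod m))"
      using i j t div_mod_less_of_less_mult[OF j] block_index_less[OF t]
      by (intro index_kron_id_mult) auto
    also have "\<dots> = complex_of_real (Q (i div m) t) * B t $$ (i mod m, j mod m)"
      using t div_mod_less_of_less_mult[OF i] div_mod_less_of_less_mult[OF j]
      by (simp add: index_block_diag_blocks if_distrib[of "\<lambda>x. _ * x"] cong: if_cong)
    finally show ?thesis .
  qed
  have "(kron_id m n Q * block_diag m n B * cadjoint (kron_id m n Q)) $$ (i, j)
      = (\<Sum>t<n. (kron_id m n Q * block_diag m n B) $$ (i, t * m + j mod m)
          * complex_of_real (Q (j div m) t))"
    unfolding cadjoint_kron_id using i j by (intro index_mult_kron_id[of _ "n * m"]) auto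
  also have "\<dots> = (\<Sum>t<n. complex_of_real (Q (i div m) t * Q (j div m) t) * B t $$ (i mod m, j mod m))"
    by (intro sum.cong refl) (simp add: blocks mult_ac)
  finally show ?thesis .
qed

lemma mat_cont_kron_id:
  assumes "\<And>s t. s < n \<Longrightarrow> t < n \<Longrightarrow> continuous_on UNIV (\<lambda>y. Q y s t)"
  shows "mat_cont (n * m) (\<lambda>y. kron_id m n (Q y))"
proof (rule mat_contI)
  fix i j assume ij: "i < n * m" "j < n * m"
  then have "continuous_on UNIV (\<lambda>y. Q y (i div m) (j div m))"
    using assms div_mod_less_of_less_mult by blast
  then show "continuous_on UNIV (\<lambda>y. kron_id m n (Q y) $$ (i, j))"
    using ij by (cases "i mod m = j mod m") (simp_all add: kron_id_def continuous_on_of_real)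
qed simp

definition lower_right_block :: "nat \<Rightarrow> 'a mat \<Rightarrow> 'a mat" where
  "lower_right_block m M = mat (dim_row M - m) (dim_col M - m) (\<lambda>(i, j). M $$ (i + m, j + m))"

lemma four_block_mat_lower_right_block:
  assumes M: "M \<in> carrier_mat k k" and F: "F \<in> carrier_mat m m" and mk: "m \<le> k"
    and top_left: "\<And>i j. i < m \<Longrightarrow> j < m \<Longrightarrow> M $$ (i, j) = F $$ (i, j)"
    and off_diagonal: "\<And>i j. i < m \<Longrightarrow> m \<le> j \<Longrightarrow> j < k \<Longrightarrow> M $$ (i, j) = 0 \<and> M $$ (j, i) = 0"
  shows "M = four_block_mat F (0\<^sub>m m (k - m)) (0\<^sub>m (k - m) m) (lower_right_block m M)" (is "M = ?B")
proof (rule eq_matI)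
  have dims: "dim_row F = m" "dim_col F = m" "dim_row (lower_right_block m M) = k - m"
      "dim_col (lower_right_block m M) = k - m"
    using M F by (auto simp: lower_right_block_def)
  then show "dim_row M = dim_row ?B" "dim_col M = dim_col ?B"
    using M mk by simp_all
  fix i j assume "i < dim_row ?B" and "j < dim_col ?B"
  then have ij: "i < k" "j < k" using dims mk by simp_all
  then show "M $$ (i, j) = ?B $$ (i, j)"
    using dims mk M top_left off_diagonal[of i j] off_diagonal[of j i]
    by (auto simp: lower_right_block_def)
qed

lemma mat_cont_lower_right_block:
  assumes "mat_cont k M"
  shows "mat_cont (k - m) (\<lambda>y. lower_right_block m (M y))"
proof (rule mat_contI)
  have dims: "dim_row (M y) = k" "dim_col (M y) = k" for y
    using mat_cont_carrier[OF assms] by auto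
  show "lower_right_block m (M y) \<in> carrier_mat (k - m) (k - m)" for y
    by (simp add: lower_right_block_def dims)
  fix i j assume "i < k - m" "j < k - m"
  then show "continuous_on UNIV (\<lambda>y. lower_right_block m (M y) $$ (i, j))"
    using mat_cont_entry[OF assms, of "i + m" "j + m"] by (simp add: lower_right_block_def dims)
qed

lemma kron_id_conj_block_diag_eq_four_block:
  assumes n: "0 < n" and Q: "orthonormal_rows n Q" and F: "F \<in> carrier_mat m m"
    and B: "\<And>s. s < n \<Longrightarrow> Q 0 s \<noteq> 0 \<Longrightarrow> B s = F"
  defines "M \<equiv> kron_id m n Q * block_diag m n B * cadjoint (kron_id m n Q)"
  shows "M = four_block_mat F (0\<^sub>m m (n * m - m)) (0\<^sub>m (n * m - m) m) (lower_right_block m M)"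
proof (rule four_block_mat_lower_right_block)
  have first_block: "M $$ (i, j) = of_bool (i div m = j div m) * F $$ (i mod m, j mod m)"
    if ij: "i < n * m" "j < n * m" and zero: "i div m = 0 \<or> j div m = 0" for i j
  proof -
    have "M $$ (i, j)
        = (\<Sum>t<n. complex_of_real (Q (i div m) t * Q (j div m) t) * F $$ (i mod m, j mod m))"
      unfolding M_def index_kron_id_conj_block_diag[OF ij]
    proof (intro sum.cong refl)
      fix t assume "t \<in> {..<n}"
      then show "complex_of_real (Q (i div m) t * Q (j div m) t) * B t $$ (i mod m, j mod m)
          = complex_of_real (Q (i div m) t * Q (j div m) t) * F $$ (i mod m, j mod m)"
        using zero B[of t] by (cases "Q 0 t = 0") auto
    qed
    also have "\<dots> = complex_of_real (\<Sum>t<n. Q (i div m) t * Q (j div m) t) * F $$ (i mod m, j mod m)"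
      by (simp add: sum_distrib_right)
    also have "\<dots> = of_bool (i div m = j div m) * F $$ (i mod m, j mod m)"
      using Q div_mod_less_of_less_mult[OF ij(1)] div_mod_less_of_less_mult[OF ij(2)]
      unfolding orthonormal_rows_def by simp
    finally show ?thesis .
  qed
  show "M \<in> carrier_mat (n * m) (n * m)"
    unfolding M_def
    by (rule mult_carrier_mat[OF mult_carrier_mat[OF kron_id_carrier block_diag_carrier]
          cadjoint_carrier_mat[OF kron_id_carrier]])
  show "F \<in> carrier_mat m m" by (fact F)
  show "m \<le> n * m" using n by simp
  show "M $$ (i, j) = F $$ (i, j)" if "i < m" "j < m" for i j
    using that n first_block[of i j] by (simp add: less_le_trans[OF _ mult_le_mono1[of 1 n m]])
  show "M $$ (i, j) = 0 \<and> M $$ (j, i) = 0" if "i < m" "m \<le> j" "j < n * m" for i j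
  proof -
    have "i < n * m" using that by simp
    moreover have "j div m \<noteq> 0" using that by (auto simp: div_greater_zero_iff)
    ultimately show ?thesis using that first_block[of i j] first_block[of j i] by simp
  qed
qed

lemma op_norm_kron_id_conj_block_diag_minus_four_block_le:
  assumes n: "0 < n" and Q: "orthonormal_rows n Q" and F: "F \<in> carrier_mat m m" and K: "0 \<le> K"
    and B: "\<And>s. s < n \<Longrightarrow> B s \<in> carrier_mat m m"
    and c: "\<And>s. s < n \<Longrightarrow> 0 \<le> c s \<and> c s \<le> 1"
    and c_one: "\<And>s. s < n \<Longrightarrow> Q 0 s \<noteq> 0 \<Longrightarrow> c s = 1"
    and near: "\<And>s. s < n \<Longrightarrow> c s \<noteq> 0 \<Longrightarrow> op_norm (B s - F) \<le> K"
  defines "U \<equiv> kron_id m n Q"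
    and "A \<equiv> \<lambda>s. B s - complex_of_real (c s) \<cdot>\<^sub>m (B s - F)"
  shows "op_norm (U * block_diag m n B * cadjoint U - four_block_mat F (0\<^sub>m m (n * m - m))
      (0\<^sub>m (n * m - m) m) (lower_right_block m (U * block_diag m n A * cadjoint U))) \<le> K"
proof -
  define E where "E s = complex_of_real (c s) \<cdot>\<^sub>m (B s - F)" for s
  have E: "E s \<in> carrier_mat m m" and BAE: "B s = A s + E s" if "s < n" for s
    using B[OF that] F by (auto simp: A_def E_def)
  have "A s = F" if "s < n" "Q 0 s \<noteq> 0" for s
    using c_one[OF that] B[OF that(1)] F by (auto simp: A_def)
  then have A_four: "U * block_diag m n A * cadjoint U = four_block_mat F (0\<^sub>m m (n * m - m))
      (0\<^sub>m (n * m - m) m) (lower_right_block m (U * block_diag m n A * cadjoint U))"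
    unfolding U_def by (rule kron_id_conj_block_diag_eq_four_block[OF n Q F])
  have carriers: "U \<in> carrier_mat (n * m) (n * m)" "cadjoint U \<in> carrier_mat (n * m) (n * m)"
    "U * block_diag m n A * cadjoint U \<in> carrier_mat (n * m) (n * m)"
    "U * block_diag m n E * cadjoint U \<in> carrier_mat (n * m) (n * m)"
    unfolding U_def by (auto intro!: mult_carrier_mat[of _ _ "n * m"])
  have "U * block_diag m n B * cadjoint U = (U * block_diag m n A + U * block_diag m n E) * cadjoint U"
    using block_diag_add[of n B A E m] BAE E
      mult_add_distrib_mat[OF carriers(1) block_diag_carrier block_diag_carrier]
    by simp
  also have "\<dots> = U * block_diag m n A * cadjoint U + U * block_diag m n E * cadjoint U"
    using carriers(1) by (intro add_mult_distrib_mat[OF _ _ carriers(2)]) auto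
  finally have "U * block_diag m n B * cadjoint U - four_block_mat F (0\<^sub>m m (n * m - m))
      (0\<^sub>m (n * m - m) m) (lower_right_block m (U * block_diag m n A * cadjoint U))
      = U * block_diag m n E * cadjoint U"
    using carriers(3,4) by (auto simp flip: A_four)
  also have "op_norm \<dots> \<le> op_norm (block_diag m n E)"
    unfolding U_def using Q by (intro op_norm_unitary_conj_le unitary_kron_id) auto
  also have "\<dots> \<le> K"
  proof (rule op_norm_block_diag_le[OF K])
    fix s assume s: "s < n"
    have "op_norm (E s) \<le> c s * op_norm (B s - F)"
      using op_norm_smult_le[of "complex_of_real (c s)" "B s - F"] c[OF s] by (simp add: E_def)
    also have "\<dots> \<le> K"
      using c[OF s] near[OF s] K op_norm_nonneg[of "B s - F"]
      by (cases "c s = 0") (auto intro: order_trans[OF mult_left_le_one_le])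
    finally show "E s \<in> carrier_mat m m \<and> op_norm (E s) \<le> K" using E[OF s] by blast
  qed
  finally show ?thesis .
qed

subsection \<open>A Householder reflection with prescribed first row\<close>

text \<open>\<open>(e\<^sub>0 + h)(e\<^sub>0 + h)\<^sup>T / (1 + h\<^sub>0) - 1\<close>: for a unit vector \<open>h\<close>,
  \<open>|e\<^sub>0 + h|\<^sup>2 = 2 (1 + h\<^sub>0)\<close>, so this is an orthogonal involution mapping \<open>e\<^sub>0\<close> to \<open>h\<close>.\<close>

definition householder :: "(nat \<Rightarrow> real) \<Rightarrow> nat \<Rightarrow> nat \<Rightarrow> real" where
  "householder h s t = (of_bool (s = 0) + h s) * (of_bool (t = 0) + h t) / (1 + h 0) - of_bool (s = t)"

lemma householder_first_row: "h 0 \<noteq> -1 \<Longrightarrow> householder h 0 t = h t"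
  by (simp add: householder_def)

lemma orthonormal_rows_householder:
  assumes n: "0 < n" and h0: "h 0 \<noteq> -1" and unit: "(\<Sum>t<n. (h t)\<^sup>2) = 1"
  shows "orthonormal_rows n (householder h)"
  unfolding orthonormal_rows_def
proof (intro allI impI)
  fix s t assume s: "s < n" and t: "t < n"
  define w where "w k = of_bool (k = 0) + h k" for k
  define p where "p = 1 + h 0"
  have p: "p \<noteq> 0" using h0 by (simp add: p_def)
  have "(\<Sum>k<n. (w k)\<^sup>2) = (\<Sum>k<n. of_bool (0 = k) * (1 + 2 * h k) + (h k)\<^sup>2)"
    by (intro sum.cong refl) (auto simp: w_def power2_eq_square algebra_simps)
  also have "\<dots> = 2 * p"
    using n unit by (simp add: sum.distrib sum_of_bool_mult p_def)
  finally have w2: "(\<Sum>k<n. (w k)\<^sup>2) = 2 * p" .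
  have entry: "householder h i k = w i * w k / p - of_bool (i = k)" for i k
    by (simp add: householder_def w_def p_def)
  have expand: "(a * c / p - d) * (b * c / p - e)
      = a * b / p\<^sup>2 * c\<^sup>2 - a / p * (e * c) - b / p * (d * c) + d * e"
    for a b c d e :: real
    by (simp add: power2_eq_square algebra_simps)
  have "(\<Sum>k<n. householder h s k * householder h t k) = (\<Sum>k<n. w s * w t / p\<^sup>2 * (w k)\<^sup>2
      - w s / p * (of_bool (t = k) * w k) - w t / p * (of_bool (s = k) * w k)
      + of_bool (s = k) * of_bool (t = k))"
    by (simp only: entry expand)
  also have "\<dots> = w s * w t / p\<^sup>2 * (\<Sum>k<n. (w k)\<^sup>2) - w s / p * (\<Sum>k<n. of_bool (t = k) * w k)
      - w t / p * (\<Sum>k<n. of_bool (s = k) * w k) + (\<Sum>k<n. of_bool (s = k) * of_bool (t = k))"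
    by (simp only: sum.distrib sum_subtractf sum_distrib_left)
  also have "\<dots> = w s * w t / p\<^sup>2 * (2 * p) - w s / p * w t - w t / p * w s + of_bool (t = s)"
    by (simp only: w2 sum_of_bool_mult[OF s] sum_of_bool_mult[OF t])
  also have "\<dots> = of_bool (s = t)"
    using p by (auto simp: field_simps power2_eq_square)
  finally show "(\<Sum>k<n. householder h s k * householder h t k) = of_bool (s = t)" .
qed

lemma continuous_on_householder:
  assumes "continuous_on S (\<lambda>y. h y 0)" "continuous_on S (\<lambda>y. h y s)" "continuous_on S (\<lambda>y. h y t)"
    and "\<And>y. y \<in> S \<Longrightarrow> h y 0 \<noteq> -1"
  shows "continuous_on S (\<lambda>y. householder (h y) s t)"
  unfolding householder_def using assms by (intro continuous_intros) (auto simp: add_eq_0_iff)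

lemma mat_cont_kron_id_householder:
  assumes "0 < n" and "\<And>s. s < n \<Longrightarrow> continuous_on UNIV (\<lambda>y. h y s)" and "\<And>y. h y 0 \<noteq> -1"
  shows "mat_cont (n * m) (\<lambda>y. kron_id m n (householder (h y)))"
proof (rule mat_cont_kron_id)
  fix s t assume "s < n" "t < n"
  with assms show "continuous_on UNIV (\<lambda>y. householder (h y) s t)"
    by (intro continuous_on_householder) auto
qed

subsection \<open>Partitions of unity and cut-off functions\<close>

lemma obtain_nonneg_unit_partition:
  fixes d :: "nat \<Rightarrow> 'a::topological_space \<Rightarrow> real"
  assumes cont: "\<And>s. s < n \<Longrightarrow> continuous_on UNIV (d s)" and cover: "\<And>y. \<exists>s<n. d s y < r"
  obtains h :: "'a \<Rightarrow> nat \<Rightarrow> real"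
  where "\<And>s. s < n \<Longrightarrow> continuous_on UNIV (\<lambda>y. h y s)" and "\<And>y s. 0 \<le> h y s"
    and "\<And>y. (\<Sum>s<n. (h y s)\<^sup>2) = 1" and "\<And>y s. h y s \<noteq> 0 \<Longrightarrow> d s y < r"
proof -
  define g where "g s y = max 0 (r - d s y)" for s y
  define N where "N y = sqrt (\<Sum>t<n. (g t y)\<^sup>2)" for y
  have N_pos: "0 < N y" for y
  proof -
    obtain s where s: "s < n" "d s y < r" using cover by blast
    then have "0 < (g s y)\<^sup>2" by (simp add: g_def)
    also have "\<dots> \<le> (\<Sum>t<n. (g t y)\<^sup>2)" using s by (intro member_le_sum) auto
    finally show ?thesis by (simp add: N_def)
  qed
  have N_cont: "continuous_on UNIV N"
    unfolding N_def g_def by (intro continuous_intros cont) auto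
  show ?thesis
  proof (rule that[of "\<lambda>y s. g s y / N y"])
    show "continuous_on UNIV (\<lambda>y. g s y / N y)" if "s < n" for s
      using N_pos unfolding g_def by (intro continuous_intros cont that N_cont) (auto simp: less_le)
    show "0 \<le> g s y / N y" for y s
      using N_pos[of y] by (simp add: g_def)
    show "(\<Sum>s<n. (g s y / N y)\<^sup>2) = 1" for y
      using N_pos[of y] by (simp add: power_divide N_def sum_nonneg flip: sum_divide_distrib)
    show "d s y < r" if "g s y / N y \<noteq> 0" for y s
      using that by (auto simp: g_def)
  qed
qed

definition cutoff :: "real \<Rightarrow> real \<Rightarrow> real \<Rightarrow> real" where
  "cutoff a b t = min 1 (max 0 ((b - t) / (b - a)))"

lemma cutoff_bounds: "0 \<le> cutoff a b t" "cutoff a b t \<le> 1"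
  by (simp_all add: cutoff_def)

lemma cutoff_eq_1: "a < b \<Longrightarrow> t \<le> a \<Longrightarrow> cutoff a b t = 1"
  by (simp add: cutoff_def)

lemma less_of_cutoff_neq_0:
  assumes "a < b" and "cutoff a b t \<noteq> 0"
  shows "t < b"
proof (rule ccontr)
  assume "\<not> t < b"
  then have "(b - t) / (b - a) \<le> 0" using assms(1) by (intro divide_nonpos_pos) auto
  then show False using assms(2) by (simp add: cutoff_def)
qed

lemma continuous_on_cutoff: "continuous_on S f \<Longrightarrow> continuous_on S (\<lambda>x. cutoff a b (f x))"
  unfolding cutoff_def divide_inverse by (intro continuous_intros)

lemma exists_unitary_conj_diag_hom_near_four_block:
  fixes f :: "'x::metric_space \<Rightarrow> complex mat" and lam :: "nat \<Rightarrow> 'y::topological_space \<Rightarrow> 'x"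
    and h :: "'y \<Rightarrow> nat \<Rightarrow> real"
  assumes n: "0 < n" and lam_cont: "\<And>s. s < n \<Longrightarrow> continuous_on UNIV (lam s)"
    and f_cont: "mat_cont m f" and K: "0 \<le> K" and \<eta>r: "\<eta> < r"
    and near: "\<And>x. dist x0 x < r \<Longrightarrow> op_norm (f x - f x0) \<le> K"
    and h_cont: "\<And>s. s < n \<Longrightarrow> continuous_on UNIV (\<lambda>y. h y s)" and h_nonneg: "\<And>y s. 0 \<le> h y s"
    and h_unit: "\<And>y. (\<Sum>s<n. (h y s)\<^sup>2) = 1"
    and h_supp: "\<And>y s. h y s \<noteq> 0 \<Longrightarrow> dist x0 (lam s y) < \<eta>"
  shows "\<exists>u b. mat_cont (n * m) u \<and> (\<forall>y. unitary_mat (u y)) \<and> mat_cont (n * m - m) b \<and>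
    sup_norm (\<lambda>y. u y * diag_hom m n lam f y * cadjoint (u y)
      - four_block_mat (f x0) (0\<^sub>m m (n * m - m)) (0\<^sub>m (n * m - m) m) (b y)) \<le> K"
proof -
  have h0: "h y 0 \<noteq> -1" for y using h_nonneg[of y 0] by linarith
  have Q: "orthonormal_rows n (householder (h y))" for y
    by (rule orthonormal_rows_householder[OF n h0 h_unit])
  define u where "u y = kron_id m n (householder (h y))" for y
  define c where "c s y = cutoff \<eta> r (dist x0 (lam s y))" for s y
  define A where "A y s = f (lam s y) - complex_of_real (c s y) \<cdot>\<^sub>m (f (lam s y) - f x0)" for y s
  define b where "b y = lower_right_block m (u y * block_diag m n (A y) * cadjoint (u y))" for y
  have u_cont: "mat_cont (n * m) u"
    unfolding u_def using n h_cont h0 by (rule mat_cont_kron_id_householder)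
  have "mat_cont m (\<lambda>y. A y s)" if "s < n" for s
  proof -
    have "mat_cont m (\<lambda>y. f (lam s y))" using lam_cont that by (intro mat_cont_compose[OF _ f_cont])
    moreover have "continuous_on UNIV (c s)"
      unfolding c_def using lam_cont that by (intro continuous_on_cutoff continuous_intros)
    ultimately show ?thesis
      unfolding A_def
      by (intro mat_cont_minus mat_cont_smult mat_cont_const mat_cont_carrier[OF f_cont])
  qed
  then have "mat_cont (n * m - m) b"
    unfolding b_def
    by (intro mat_cont_lower_right_block mat_cont_mult mat_cont_cadjoint u_cont mat_cont_block_diag)
  moreover have "op_norm (u y * diag_hom m n lam f y * cadjoint (u y)
      - four_block_mat (f x0) (0\<^sub>m m (n * m - m)) (0\<^sub>m (n * m - m) m) (b y)) \<le> K" for y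
    unfolding u_def b_def A_def diag_hom_eq_block_diag
  proof (rule op_norm_kron_id_conj_block_diag_minus_four_block_le[OF n Q _ K])
    show "f x0 \<in> carrier_mat m m" "f (lam s y) \<in> carrier_mat m m" for s
      using mat_cont_carrier[OF f_cont] by blast+
    show "0 \<le> c s y \<and> c s y \<le> 1" for s by (simp add: c_def cutoff_bounds)
    show "c s y = 1" if "householder (h y) 0 s \<noteq> 0" for s
      using that h_supp[of y s] \<eta>r
      by (simp add: householder_first_row[of "h y", OF h0] c_def cutoff_eq_1)
    show "op_norm (f (lam s y) - f x0) \<le> K" if "c s y \<noteq> 0" for s
      using near less_of_cutoff_neq_0[OF \<eta>r that[unfolded c_def]] by blast
  qed
  moreover have "unitary_mat (u y)" for y unfolding u_def by (rule unitary_kron_id[OF Q])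
  ultimately show ?thesis using u_cont by (blast intro: sup_norm_le)
qed

theorem corollary3p3:
  fixes f :: "'x::metric_space \<Rightarrow> complex mat"
    and lam :: "nat \<Rightarrow> 'y::metric_space \<Rightarrow> 'x"
    and m n :: nat and \<epsilon> \<eta> :: real and x0 :: 'x
  assumes "compact (UNIV :: 'x set)" and "compact (UNIV :: 'y set)"
    and "\<forall>s<n. continuous_on UNIV (lam s)"
    and "mat_cont m f"
    and "\<epsilon> > 0" and "\<eta> > 0"
    and "\<forall>x y. dist x y < 2 * \<eta> \<longrightarrow> op_norm (f x - f y) < \<epsilon>"
    and "\<forall>y. \<exists>s<n. lam s y \<in> ball x0 \<eta>"
  shows "\<exists>u b. mat_cont (n*m) u \<and> (\<forall>y. unitary_mat (u y)) \<and> mat_cont (n*m - m) b \<and>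
     sup_norm (\<lambda>y. u y * diag_hom m n lam f y * cadjoint (u y)
        - four_block_mat (f x0) (0\<^sub>m m (n*m - m)) (0\<^sub>m (n*m - m) m) (b y)) < \<epsilon>"
proof -
  note X_compact = assms(1) and lam_cont = assms(3) and f_cont = assms(4) and \<eta> = assms(6)
    and f_unif = assms(7) and cover = assms(8)
  have n: "0 < n" using cover by (metis not_less0 neq0_conv)
  \<comment> \<open>Any radius strictly between \<open>\<eta>\<close> and \<open>2\<eta>\<close> works.\<close>
  define r where "r = 3 / 2 * \<eta>"
  have r: "\<eta> < r" "r < 2 * \<eta>" using \<eta> by (simp_all add: r_def)
  obtain K where K: "0 \<le> K" "K < \<epsilon>" "\<And>x. dist x0 x \<le> r \<Longrightarrow> op_norm (f x - f x0) \<le> K"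
  proof (rule obtain_uniform_op_norm_bound[OF X_compact f_cont])
    show "0 \<le> r" using r \<eta> by simp
    show "op_norm (f x - f x0) < \<epsilon>" if "dist x0 x \<le> r" for x
      using f_unif that r(2) by (simp add: dist_commute)
  qed (blast intro: that)
  define d where "d s y = dist x0 (lam s y)" for s y
  have "continuous_on UNIV (d s)" if "s < n" for s
    unfolding d_def using lam_cont that by (intro continuous_intros) auto
  then obtain h :: "'y \<Rightarrow> nat \<Rightarrow> real" where h: "\<And>s. s < n \<Longrightarrow> continuous_on UNIV (\<lambda>y. h y s)"
    "\<And>y s. 0 \<le> h y s" "\<And>y. (\<Sum>s<n. (h y s)\<^sup>2) = 1" "\<And>y s. h y s \<noteq> 0 \<Longrightarrow> d s y < \<eta>"
    by (rule obtain_nonneg_unit_partition) (use cover in \<open>auto simp: d_def dist_commute\<close>)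
  have near: "op_norm (f x - f x0) \<le> K" if "dist x0 x < r" for x
    using K(3) that by simp
  show ?thesis
    using exists_unitary_conj_diag_hom_near_four_block[OF n lam_cont[rule_format] f_cont K(1) r(1) near
        h(1-3) h(4)[unfolded d_def]] K(2)
    by (meson le_less_trans)
qed

end
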